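(* Let $k\ge 1$ be an integer and for $x_1,\dots,x_k\ge 1$ define $$F(x_1,\dots,x_k)=\frac{\sum_{i=1}^k i\left(1-\frac{1}{x_i}\right)}{\sum_{i=1}^k i\prod_{j=i+1}^k x_j}.$$ Then $\sup_{x_1,\dots,x_k\ge 1}F(x_1,\dots,x_k)=\frac{1}{k}$.
   Context: The empty product (for $i=k$) equals $1$. *)

theory Defs
  imports Complex_Main
begin

text \<open>F(x_1,...,x_k) with x given as a function on indices 1..k
  (values outside 1..k are irrelevant). The empty product equals 1.\<close>
definition F :: "nat \<Rightarrow> (nat \<Rightarrow> real) \<Rightarrow> real" where
  "F k x = (\<Sum>i=1..k. real i * (1 - 1 / x i)) /
           (\<Sum>i=1..k. real i * (\<Prod>j=i+1..k. x j))"

end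

theory Submission
  imports Defs
begin

(* Write T_i = x_{i+1} * ... * x_k for the tail products, so F = N / D with
   N = sum_i i (1 - 1/x_i) and D = sum_i i T_i.

   Upper bound: put u_i = i T_i / k.  Then u_k = 1, sum_i u_i = D / k and
   (i-1) u_i / u_{i-1} = i / x_i.  A telescoping estimate based on
   ln y <= y - 1 (lemma sum_ratio_ln_bound) gives
   sum_i u_i + sum_{i>=2} (i-1) u_i / u_{i-1} >= k(k+1)/2 + k ln u_k,
   i.e. D/k >= k(k+1)/2 - sum_{i>=2} i/x_i >= N, hence F <= 1/k.

   Sharpness: for x_1 = t and x_i = i/(i-1) (i >= 2) the tail products
   telescope to T_i = k/i, and F = 1/k - 1/(t k^2), which tends to 1/k
   as t grows.  The theorem combines both bounds. *)

text \<open>Telescoping estimate: for positive u_1,...,u_m,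
  the sum of the u_i plus the weighted consecutive ratios dominates
  m(m+1)/2 + m ln u_m.  Each step uses only ln y <= y - 1.\<close>
lemma sum_ratio_ln_bound:
  fixes u :: "nat \<Rightarrow> real"
  assumes pos: "\<And>i. i \<ge> 1 \<Longrightarrow> u i > 0" and m: "m \<ge> 1"
  shows "(\<Sum>i=1..m. u i) + (\<Sum>i=2..m. real (i - 1) * u i / u (i - 1))
          \<ge> real m * (real m + 1) / 2 + real m * ln (u m)"
  using m
proof (induction m rule: nat_induct_at_least)
  case base
  show ?case using ln_le_minus_one[OF pos[of 1]] by simp
next
  case (Suc m)
  have um: "u m > 0" and us: "u (Suc m) > 0" using pos Suc.hyps by auto
  have ln_last: "ln (u (Suc m)) \<le> u (Suc m) - 1"
    using ln_le_minus_one[OF us] .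
  have "ln (u (Suc m) / u m) \<le> u (Suc m) / u m - 1"
    using ln_le_minus_one um us by simp
  then have "real m * (ln (u (Suc m)) - ln (u m)) \<le> real m * (u (Suc m) / u m - 1)"
    using um us by (simp add: ln_div mult_left_mono)
  then have ln_ratio: "real m * ln (u (Suc m)) - real m * ln (u m)
      \<le> real m * (u (Suc m) / u m) - real m"
    by (simp add: algebra_simps)
  have ratio_sum: "(\<Sum>i=2..Suc m. real (i - 1) * u i / u (i - 1))
      = (\<Sum>i=2..m. real (i - 1) * u i / u (i - 1)) + real m * (u (Suc m) / u m)"
    using Suc.hyps by simp
  have sum_Suc: "(\<Sum>i=1..Suc m. u i) = (\<Sum>i=1..m. u i) + u (Suc m)"
    by simp
  have series_Suc: "real (Suc m) * (real (Suc m) + 1) / 2 = real m * (real m + 1) / 2 + real m + 1"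
    by (simp add: field_simps)
  show ?case
    unfolding sum_Suc ratio_sum series_Suc using Suc.IH ln_last ln_ratio
    by (simp add: algebra_simps)
qed

definition tail_prod :: "nat \<Rightarrow> (nat \<Rightarrow> real) \<Rightarrow> nat \<Rightarrow> real" where
  "tail_prod k x i = (\<Prod>j=i+1..k. x j)"

lemma F_tail_prod:
  "F k x = (\<Sum>i=1..k. real i * (1 - 1 / x i)) / (\<Sum>i=1..k. real i * tail_prod k x i)"
  by (simp add: F_def tail_prod_def)

lemma tail_prod_last: "tail_prod k x k = 1"
  by (simp add: tail_prod_def)

lemma tail_prod_Suc:
  assumes "i < k"
  shows "tail_prod k x i = x (Suc i) * tail_prod k x (Suc i)"
  using assms by (simp add: tail_prod_def prod.atLeast_Suc_atMost)

lemma tail_prod_ge_1: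
  assumes "\<forall>j\<in>{1..k}. x j \<ge> 1"
  shows "tail_prod k x i \<ge> 1"
  unfolding tail_prod_def by (rule prod_ge_1) (use assms in auto)

lemma numerator_eq:
  "(\<Sum>i=1..k. real i * (1 - 1 / x i)) = real k * (real k + 1) / 2 - (\<Sum>i=1..k. real i / x i)"
proof -
  have "(\<Sum>i=1..k. real i * (1 - 1 / x i)) = (\<Sum>i=1..k. real i) - (\<Sum>i=1..k. real i / x i)"
    by (simp add: algebra_simps sum_subtractf)
  moreover have "2 * (\<Sum>i=1..k. real i) = real k * (real k + 1)"
    using double_gauss_sum_from_Suc_0[of k] by simp
  ultimately show ?thesis by simp
qed

text \<open>The core inequality k N <= D, obtained from sum_ratio_ln_bound with u_i = i T_i / k.\<close>
lemma numerator_le_denominator: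
  fixes x :: "nat \<Rightarrow> real"
  assumes k: "k \<ge> 1" and x: "\<forall>i\<in>{1..k}. x i \<ge> 1"
  shows "real k * (\<Sum>i=1..k. real i * (1 - 1 / x i)) \<le> (\<Sum>i=1..k. real i * tail_prod k x i)"
proof -
  define D where "D = (\<Sum>i=1..k. real i * tail_prod k x i)"
  define u where "u i = real i * tail_prod k x i / real k" for i
  have T_ge: "tail_prod k x i \<ge> 1" for i using tail_prod_ge_1[OF x] .
  have u_pos: "u i > 0" if "i \<ge> 1" for i
    unfolding u_def using that k T_ge[of i] by simp
  have u_last: "u k = 1"
    unfolding u_def tail_prod_last using k by simp
  have u_sum: "(\<Sum>i=1..k. u i) = D / real k"
    unfolding u_def D_def by (simp add: sum_divide_distrib)
  have u_ratio: "(\<Sum>i=2..k. real (i - 1) * u i / u (i - 1)) = (\<Sum>i=2..k. real i / x i)"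
  proof (rule sum.cong)
    fix i assume i: "i \<in> {2..k}"
    then have "Suc (i - 1) = i" "i - 1 < k" by auto
    then have T_prev: "tail_prod k x (i - 1) = x i * tail_prod k x i"
      using tail_prod_Suc[of "i - 1" k x] by simp
    have x_i: "x i \<ge> 1" using x i by auto
    have "real (i - 1) * u i / u (i - 1)
        = real (i - 1) * (real i * tail_prod k x i) / (real (i - 1) * (x i * tail_prod k x i))"
      unfolding u_def T_prev using k by simp
    also have "\<dots> = real i / x i"
      using i x_i T_ge[of i] by (simp add: field_simps)
    finally show "real (i - 1) * u i / u (i - 1) = real i / x i" .
  qed simp
  have "D / real k + (\<Sum>i=2..k. real i / x i) \<ge> real k * (real k + 1) / 2"
    using sum_ratio_ln_bound[of u k, OF u_pos k] unfolding u_last u_sum u_ratio by simp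
  moreover have "(\<Sum>i=1..k. real i / x i) = 1 / x 1 + (\<Sum>i=2..k. real i / x i)"
    using k by (simp add: sum.atLeast_Suc_atMost numeral_2_eq_2)
  moreover have "1 / x 1 \<ge> 0" using x k by (auto intro: order_trans[OF zero_le_one])
  ultimately have "(\<Sum>i=1..k. real i * (1 - 1 / x i)) \<le> D / real k"
    unfolding numerator_eq by linarith
  then show ?thesis unfolding D_def using k by (simp add: field_simps)
qed

lemma F_le:
  assumes k: "k \<ge> 1" and x: "\<forall>i\<in>{1..k}. x i \<ge> 1"
  shows "F k x \<le> 1 / real k"
proof -
  have "real i * tail_prod k x i > 0" if "i \<in> {1..k}" for i
    using that tail_prod_ge_1[OF x, of i] by (simp add: less_le_trans[OF zero_less_one])
  then have "(\<Sum>i=1..k. real i * tail_prod k x i) > 0"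
    using k by (intro sum_pos) auto
  with numerator_le_denominator[OF k x] k show ?thesis
    unfolding F_tail_prod by (simp add: divide_simps mult.commute)
qed

definition extremal :: "real \<Rightarrow> nat \<Rightarrow> real" where
  "extremal t i = (if i \<le> 1 then t else real i / (real i - 1))"

lemma extremal_ge_1: "t \<ge> 1 \<Longrightarrow> extremal t i \<ge> 1"
  by (simp add: extremal_def field_simps)

lemma tail_prod_extremal:
  assumes "1 \<le> i" "i \<le> k"
  shows "tail_prod k (extremal t) i = real k / real i"
  using assms(2)
proof (induction k rule: nat_induct_at_least)
  case base
  show ?case using assms by (simp add: tail_prod_last)
next
  case (Suc k)
  have "tail_prod (Suc k) (extremal t) i = tail_prod k (extremal t) i * extremal t (Suc k)"
    using Suc.hyps by (simp add: tail_prod_def)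
  also have "\<dots> = real (Suc k) / real i"
    using Suc assms by (simp add: extremal_def tail_prod_def)
  finally show ?case .
qed

lemma F_extremal:
  assumes k: "k \<ge> 1" and t: "t \<ge> 1"
  shows "F k (extremal t) = 1 / real k - 1 / (t * real k ^ 2)"
proof -
  have D: "(\<Sum>i=1..k. real i * tail_prod k (extremal t) i) = real k * real k"
    by (simp add: tail_prod_extremal)
  have tail_terms: "(\<Sum>i=2..k. real i * (1 - 1 / extremal t i)) = real k - 1"
  proof -
    have "(\<Sum>i=2..k. real i * (1 - 1 / extremal t i)) = (\<Sum>i=2..k. 1)"
      by (rule sum.cong) (auto simp: extremal_def field_simps)
    then show ?thesis using k by simp
  qed
  have "(\<Sum>i=1..k. real i * (1 - 1 / extremal t i)) = real k - 1 / t"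
    using k tail_terms by (simp add: sum.atLeast_Suc_atMost numeral_2_eq_2 extremal_def)
  then show ?thesis
    unfolding F_tail_prod D using k t by (simp add: field_simps power2_eq_square)
qed

lemma F_approaches:
  assumes k: "k \<ge> 1" and e: "e > 0"
  shows "\<exists>x. (\<forall>i\<in>{1..k}. x i \<ge> 1) \<and> F k x > 1 / real k - e"
proof -
  define t where "t = 1 + 1 / (e * real k ^ 2)"
  have k2: "real k ^ 2 > 0" using k by simp
  have t: "t \<ge> 1" unfolding t_def using e k2 by simp
  have "t * real k ^ 2 * e = real k ^ 2 * e + 1"
    unfolding t_def using e k2 by (simp add: field_simps)
  then have "1 / (t * real k ^ 2) < e"
    using e k2 t by (simp add: divide_less_eq mult.commute)
  then show ?thesis
    using F_extremal[OF k t] extremal_ge_1[OF t] by (intro exI[of _ "extremal t"]) auto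
qed

theorem theorem3:
  fixes k :: nat
  assumes "k \<ge> 1"
  shows "Sup {F k x | x. \<forall>i\<in>{1..k}. x i \<ge> 1} = 1 / real k"
proof (rule cSup_eq_non_empty)
  show "{F k x | x. \<forall>i\<in>{1..k}. x i \<ge> 1} \<noteq> {}"
    using F_approaches[OF assms zero_less_one] by blast
  show "\<And>z. z \<in> {F k x | x. \<forall>i\<in>{1..k}. x i \<ge> 1} \<Longrightarrow> z \<le> 1 / real k"
    using F_le[OF assms] by auto
  fix y assume upper: "\<And>z. z \<in> {F k x | x. \<forall>i\<in>{1..k}. x i \<ge> 1} \<Longrightarrow> z \<le> y"
  show "1 / real k \<le> y"
  proof (rule dense_le)
    fix z assume "z < 1 / real k"
    then obtain x where "\<forall>i\<in>{1..k}. x i \<ge> 1" "F k x > z"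
      using F_approaches[OF assms, of "1 / real k - z"] by auto
    with upper show "z \<le> y" by fastforce
  qed
qed

end
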